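(* Let $u_0,\dots,u_4$ be pairwise distinct complex numbers with $M_i(U)\neq 0$ for all $i$, let $Y\subset\mathbb{P}^4=\mathrm{Proj}\,\mathbb{C}[v_0,\dots,v_4]$ be the quintic $\sum_iM_i(U)v_i^5=0$ (the Fermat quintic after a diagonal rescaling of coordinates), and let $\Lambda$ be the plane $\sum_iM_i(U)v_i=0,\ \sum_iM_i(U)u_i^4v_i=0$. Let $P=(1,1,1,1,1)$, $Q=(u_0,\dots,u_4)$ and $R=(l_0,\dots,l_4)$ be vectors spanning $\Lambda$, and use coordinates $[x:y:z]$ on $\Lambda$ for the point $xP+yQ+zR$. Define $S_{mn}$ by $\delta(U)S_{mn}=\sum_{i=0}^4M_i(U)u_i^ml_i^n$, and let $\alpha,\beta$ satisfy $S_{30}\alpha^2+2S_{31}\alpha+S_{32}=0$ and $S_{20}\beta^2+2S_{11}\beta+S_{02}=0$. Then the plane $\Lambda$ cuts $Y$ along a conic of the form $d z^2-(\beta x+\alpha y)z+xy=0$ and a cubic (possibly degenerate) passing through $P$ and $Q$ if and only if the following equations are satisfied for some parameter $d\in\mathbb{C}$: $10S_{03}+\beta g_2(P)-g_1(P)d=0$, $10S_{23}+\alpha g_2(Q)-g_1(Q)d=0$, $5S_{04}+\beta g_3-g_2(P)d=0$, $5S_{14}+\alpha g_3-g_2(Q)d=0$, $S_{05}-g_3d=0$, where $g_1(P)=20S_{11}+10S_{20}\beta$, $g_1(Q)=20S_{31}+10S_{30}\alpha$, $g_{1xy}=30S_{21}+10S_{20}\alpha+10S_{30}\beta$, $g_2(P)=30S_{12}+\alpha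 g_1(P)+\beta g_{1xy}-10S_{20}d$, $g_2(Q)=30S_{22}+\beta g_1(Q)+\alpha g_{1xy}-10S_{30}d$, $g_3=20S_{13}+\alpha g_2(P)+\beta g_2(Q)-dg_{1xy}$.
   Context: For $U=(u_0,\dots,u_4)$: $\delta(U)=\prod_{j>k}(u_j-u_k)$; for each $i$, $e_1(i),e_2(i),e_3(i)$ are the elementary symmetric polynomials in $\{u_j\}_{j\neq i}$; $d_i=\prod_{j,k\neq i,\,j>k}(u_j-u_k)$; $n_i=e_2(i)^2-e_1(i)e_3(i)$; $M_i(U)=(-1)^id_in_i$. These satisfy $\sum_iM_i(U)u_i^k=0$ for $k\in\{0,1,4,5\}$, so $P,Q\in Y\cap\Lambda$. The quantities $S_{mn}$ are polynomial in the $u_i$ and $l_i$; in particular $S_{20}=e_2$ and $S_{30}=e_3$ (elementary symmetric polynomials of $u_0,\dots,u_4$). *)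

theory Defs
  imports Complex_Main
begin

definition idx :: "nat set" where "idx = {..<5}"

definition delta :: "(nat \<Rightarrow> complex) \<Rightarrow> complex" where
  "delta u = (\<Prod>j\<in>idx. \<Prod>k\<in>{..<j}. (u j - u k))"

definition esym :: "nat \<Rightarrow> nat set \<Rightarrow> (nat \<Rightarrow> complex) \<Rightarrow> complex" where
  "esym r A u = (\<Sum>B\<in>{B. B \<subseteq> A \<and> card B = r}. \<Prod>j\<in>B. u j)"

definition e1 :: "(nat \<Rightarrow> complex) \<Rightarrow> nat \<Rightarrow> complex" where
  "e1 u i = esym 1 (idx - {i}) u"
definition e2 :: "(nat \<Rightarrow> complex) \<Rightarrow> nat \<Rightarrow> complex" where
  "e2 u i = esym 2 (idx - {i}) u"
definition e3 :: "(nat \<Rightarrow> complex) \<Rightarrow> nat \<Rightarrow> complex" where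
  "e3 u i = esym 3 (idx - {i}) u"

definition dd :: "(nat \<Rightarrow> complex) \<Rightarrow> nat \<Rightarrow> complex" where
  "dd u i = (\<Prod>j\<in>idx - {i}. \<Prod>k\<in>{..<j} - {i}. (u j - u k))"

definition nn :: "(nat \<Rightarrow> complex) \<Rightarrow> nat \<Rightarrow> complex" where
  "nn u i = (e2 u i)^2 - e1 u i * e3 u i"

definition MM :: "(nat \<Rightarrow> complex) \<Rightarrow> nat \<Rightarrow> complex" where
  "MM u i = (-1)^i * dd u i * nn u i"

definition SS :: "(nat \<Rightarrow> complex) \<Rightarrow> (nat \<Rightarrow> complex) \<Rightarrow> nat \<Rightarrow> nat \<Rightarrow> complex" where
  "SS u l m n = (\<Sum>i\<in>idx. MM u i * u i ^ m * l i ^ n) / delta u"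

text \<open>The quintic form of Y restricted to Lambda, in coordinates [x:y:z] for xP+yQ+zR.\<close>
definition quintic_on_plane ::
  "(nat \<Rightarrow> complex) \<Rightarrow> (nat \<Rightarrow> complex) \<Rightarrow> complex \<Rightarrow> complex \<Rightarrow> complex \<Rightarrow> complex" where
  "quintic_on_plane u l x y z = (\<Sum>i\<in>idx. MM u i * (x + y * u i + z * l i) ^ 5)"

definition cubic_form :: "(nat \<Rightarrow> nat \<Rightarrow> complex) \<Rightarrow> complex \<Rightarrow> complex \<Rightarrow> complex \<Rightarrow> complex" where
  "cubic_form c x y z = (\<Sum>(a,b)\<in>{(a,b). a + b \<le> 3}. c a b * x ^ a * y ^ b * z ^ (3 - a - b))"

definition conic :: "complex \<Rightarrow> complex \<Rightarrow> complex \<Rightarrow> complex \<Rightarrow> complex \<Rightarrow> complex \<Rightarrow> complex" where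
  "conic d \<alpha> \<beta> x y z = d * z^2 - (\<beta> * x + \<alpha> * y) * z + x * y"

definition g1P where "g1P u l \<alpha> \<beta> = 20 * SS u l 1 1 + 10 * SS u l 2 0 * \<beta>"
definition g1Q where "g1Q u l \<alpha> \<beta> = 20 * SS u l 3 1 + 10 * SS u l 3 0 * \<alpha>"
definition g1xy where "g1xy u l \<alpha> \<beta> = 30 * SS u l 2 1 + 10 * SS u l 2 0 * \<alpha> + 10 * SS u l 3 0 * \<beta>"
definition g2P where "g2P u l \<alpha> \<beta> d =
  30 * SS u l 1 2 + \<alpha> * g1P u l \<alpha> \<beta> + \<beta> * g1xy u l \<alpha> \<beta> - 10 * SS u l 2 0 * d"
definition g2Q where "g2Q u l \<alpha> \<beta> d =
  30 * SS u l 2 2 + \<beta> * g1Q u l \<alpha> \<beta> + \<alpha> * g1xy u l \<alpha> \<beta> - 10 * SS u l 3 0 * d"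
definition g3 where "g3 u l \<alpha> \<beta> d =
  20 * SS u l 1 3 + \<alpha> * g2P u l \<alpha> \<beta> d + \<beta> * g2Q u l \<alpha> \<beta> d - d * g1xy u l \<alpha> \<beta>"

definition conic_eqns :: "(nat \<Rightarrow> complex) \<Rightarrow> (nat \<Rightarrow> complex) \<Rightarrow> complex \<Rightarrow> complex \<Rightarrow> complex \<Rightarrow> bool" where
  "conic_eqns u l \<alpha> \<beta> d \<longleftrightarrow>
     10 * SS u l 0 3 + \<beta> * g2P u l \<alpha> \<beta> d - g1P u l \<alpha> \<beta> * d = 0 \<and>
     10 * SS u l 2 3 + \<alpha> * g2Q u l \<alpha> \<beta> d - g1Q u l \<alpha> \<beta> * d = 0 \<and>
     5 * SS u l 0 4 + \<beta> * g3 u l \<alpha> \<beta> d - g2P u l \<alpha> \<beta> d * d = 0 \<and>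
     5 * SS u l 1 4 + \<alpha> * g3 u l \<alpha> \<beta> d - g2Q u l \<alpha> \<beta> d * d = 0 \<and>
     SS u l 0 5 - g3 u l \<alpha> \<beta> d * d = 0"

end

theory Submission
  imports Defs
begin

text \<open>
  On \<open>\<Lambda>\<close> the quintic is \<open>\<Sum>\<^sub>i M\<^sub>i (x + y u\<^sub>i + z l\<^sub>i)\<^sup>5\<close>, whose coefficients are multinomial
  multiples of \<open>\<delta>(U) S\<^sub>m\<^sub>n\<close>. Writing \<open>M\<^sub>i = (-1)\<^sup>i d\<^sub>i n\<^sub>i\<close> with \<open>n\<^sub>i\<close> a quadratic polynomial in \<open>u\<^sub>i\<close>,
  the sums \<open>\<Sum>\<^sub>i M\<^sub>i u\<^sub>i\<^sup>k\<close> for \<open>k = 0, 1, 4, 5\<close> become Laplace expansions of Vandermonde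
  determinants with a repeated column, once \<open>u\<^sub>i\<^sup>4 n\<^sub>i\<close> is reduced modulo \<open>\<Prod>\<^sub>j (t - u\<^sub>j)\<close>; so they vanish,
  and \<open>R \<in> \<Lambda>\<close> kills two more coefficients.

  Dividing by the conic then leaves, for every \<open>d\<close>, the explicit cubic cofactor whose coefficients are
  the \<open>g\<close>'s, and a remainder \<open>\<delta>(U) (10 z\<^sup>2 (x\<^sup>3 B + y\<^sup>3 A) + z\<^sup>3 q\<^sub>d)\<close>, where \<open>A = 0\<close>, \<open>B = 0\<close> are the
  equations for \<open>\<alpha>, \<beta>\<close> and \<open>q\<^sub>d\<close> is a quadric without \<open>xy\<close>-term whose five coefficients are the
  equations of the theorem. Hence the quintic factors through the conic iff \<open>conic \<cdot> K = z\<^sup>3 q\<^sub>d\<close>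
  for some cubic \<open>K\<close>, and restricting to the lines through \<open>(0:0:1)\<close> shows that this forces
  \<open>q\<^sub>d = 0\<close>.
\<close>

lemma esym_0: "finite A \<Longrightarrow> esym 0 A u = 1"
proof -
  assume "finite A"
  then have "{B. B \<subseteq> A \<and> card B = 0} = {{}}"
    by (auto dest: finite_subset)
  then show ?thesis
    unfolding esym_def by simp
qed

lemma esym_eq_0_if_card_less: "finite A \<Longrightarrow> card A < r \<Longrightarrow> esym r A u = 0"
proof -
  assume "finite A" "card A < r"
  then have "{B. B \<subseteq> A \<and> card B = r} = {}"
    using card_mono leD by blast
  then show ?thesis
    unfolding esym_def by (simp only: sum.empty)
qed

lemma esym_insert:
  assumes "finite A" "a \<notin> A"
  shows "esym (Suc r) (insert a A) u = esym (Suc r) A u + u a * esym r A u"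
proof -
  let ?X = "{B. B \<subseteq> A \<and> card B = Suc r}"
  let ?Y = "{B. B \<subseteq> A \<and> card B = r}"
  have split: "{B. B \<subseteq> insert a A \<and> card B = Suc r} = ?X \<union> insert a ` ?Y"
  proof (intro set_eqI iffI)
    fix B assume B: "B \<in> {B. B \<subseteq> insert a A \<and> card B = Suc r}"
    show "B \<in> ?X \<union> insert a ` ?Y"
    proof (cases "a \<in> B")
      case True
      with B assms(1) have "B = insert a (B - {a})" "B - {a} \<in> ?Y"
        by (auto dest: finite_subset)
      then show ?thesis by blast
    next
      case False
      with B show ?thesis by auto
    qed
  next
    fix B assume "B \<in> ?X \<union> insert a ` ?Y"
    with assms show "B \<in> {B. B \<subseteq> insert a A \<and> card B = Suc r}"
      by (auto simp: card_insert_if rev_finite_subset[OF assms(1)])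
  qed
  have fin: "finite ?X" "finite ?Y"
    using assms(1) by (auto intro: finite_subset[of _ "Pow A"])
  have disj: "?X \<inter> insert a ` ?Y = {}"
    using assms(2) by auto
  have inj: "inj_on (insert a) ?Y"
    using assms(2) by (intro inj_onI) (metis (no_types, lifting) Diff_insert_absorb mem_Collect_eq subsetD)
  have "esym (Suc r) (insert a A) u = (\<Sum>B\<in>?X. \<Prod>j\<in>B. u j) + (\<Sum>B\<in>?Y. \<Prod>j\<in>insert a B. u j)"
    unfolding esym_def split sum.union_disjoint[OF fin(1) finite_imageI[OF fin(2)] disj]
      sum.reindex[OF inj] by simp
  also have "(\<Sum>B\<in>?Y. \<Prod>j\<in>insert a B. u j) = (\<Sum>B\<in>?Y. u a * (\<Prod>j\<in>B. u j))"
  proof (rule sum.cong[OF refl])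
    fix B assume "B \<in> ?Y"
    with assms have "finite B" "a \<notin> B"
      by (auto intro: finite_subset)
    then show "(\<Prod>j\<in>insert a B. u j) = u a * (\<Prod>j\<in>B. u j)"
      by simp
  qed
  finally show ?thesis
    unfolding esym_def by (simp add: sum_distrib_left)
qed

lemma esym_remove:
  assumes "finite A" "i \<in> A"
  shows "esym (Suc r) A u = esym (Suc r) (A - {i}) u + u i * esym r (A - {i}) u"
  using esym_insert[of "A - {i}" i r u] assms by (simp add: insert_absorb)

lemma e_eq_esym_idx:
  assumes "i < 5"
  shows "e1 u i = esym 1 idx u - u i"
    and "e2 u i = esym 2 idx u - u i * esym 1 idx u + u i ^ 2"
    and "e3 u i = esym 3 idx u - u i * esym 2 idx u + u i ^ 2 * esym 1 idx u - u i ^ 3"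
proof -
  have fin: "finite (idx - {i})" by (simp add: idx_def)
  have "finite idx" "i \<in> idx"
    using assms by (simp_all add: idx_def)
  note rec = esym_remove[OF this, of _ u]
  have rec1: "e1 u i = esym 1 idx u - u i"
    using rec[of 0] esym_0[OF fin] by (simp add: e1_def)
  have rec2: "e2 u i = esym 2 idx u - u i * e1 u i"
    using rec[of 1] by (simp add: e1_def e2_def numeral_2_eq_2)
  have rec3: "e3 u i = esym 3 idx u - u i * e2 u i"
    using rec[of 2] by (simp add: e2_def e3_def numeral_3_eq_3 numeral_2_eq_2)
  show "e1 u i = esym 1 idx u - u i" by (fact rec1)
  show "e2 u i = esym 2 idx u - u i * esym 1 idx u + u i ^ 2"
    unfolding rec2 rec1 by (simp add: algebra_simps power2_eq_square)
  show "e3 u i = esym 3 idx u - u i * esym 2 idx u + u i ^ 2 * esym 1 idx u - u i ^ 3"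
    unfolding rec3 rec2 rec1 by (simp add: algebra_simps power2_eq_square power3_eq_cube)
qed

lemma nn_eq_quadratic:
  assumes "i < 5"
  shows "nn u i = esym 2 idx u * u i ^ 2 + (esym 3 idx u - esym 1 idx u * esym 2 idx u) * u i
    + esym 2 idx u ^ 2 - esym 1 idx u * esym 3 idx u"
  unfolding nn_def e_eq_esym_idx[OF assms] by algebra

lemma esym_idx_root:
  assumes "i < 5"
  shows "u i ^ 5 = esym 1 idx u * u i ^ 4 - esym 2 idx u * u i ^ 3 + esym 3 idx u * u i ^ 2
    - esym 4 idx u * u i + esym 5 idx u"
proof -
  have fin: "finite (idx - {i})" by (simp add: idx_def)
  have "card (idx - {i}) = 4"
    using assms by (simp add: idx_def)
  then have e5: "esym 5 (idx - {i}) u = 0"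
    by (intro esym_eq_0_if_card_less fin) simp
  have "finite idx" "i \<in> idx"
    using assms by (simp_all add: idx_def)
  note rec = esym_remove[OF this, of _ u]
  have "esym 4 idx u = esym 4 (idx - {i}) u + u i * e3 u i"
    using rec[of 3] by (simp add: e3_def numeral_eq_Suc)
  moreover have "esym 5 idx u = u i * esym 4 (idx - {i}) u"
    using rec[of 4] e5 by (simp add: numeral_eq_Suc)
  ultimately show ?thesis
    unfolding e_eq_esym_idx[OF assms] by algebra
qed

lemma dd_eq:
  "dd u 0 = (u 2 - u 1) * (u 3 - u 1) * (u 3 - u 2) * (u 4 - u 1) * (u 4 - u 2) * (u 4 - u 3)"
  "dd u 1 = (u 2 - u 0) * (u 3 - u 0) * (u 3 - u 2) * (u 4 - u 0) * (u 4 - u 2) * (u 4 - u 3)"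
  "dd u 2 = (u 1 - u 0) * (u 3 - u 0) * (u 3 - u 1) * (u 4 - u 0) * (u 4 - u 1) * (u 4 - u 3)"
  "dd u 3 = (u 1 - u 0) * (u 2 - u 0) * (u 2 - u 1) * (u 4 - u 0) * (u 4 - u 1) * (u 4 - u 2)"
  "dd u 4 = (u 1 - u 0) * (u 2 - u 0) * (u 2 - u 1) * (u 3 - u 0) * (u 3 - u 1) * (u 3 - u 2)"
  unfolding dd_def idx_def
  by (simp_all add: eval_nat_numeral lessThan_Suc insert_Diff_if algebra_simps)

lemma sum_lessThan_5: "(\<Sum>i<(5::nat). f i) = f 0 + f 1 + f 2 + f 3 + (f 4 :: 'a::comm_monoid_add)"
  by (simp add: eval_nat_numeral)

text \<open>Laplace expansion of the \<open>5 \<times> 5\<close> determinant with columns \<open>1, u, u\<^sup>2, u\<^sup>3\<close> and a fifth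
  column that is a combination of these.\<close>
lemma alternating_minor_sum_cubic:
  "(\<Sum>i<5. (-1) ^ i * dd u i * (a + b * u i + c * u i ^ 2 + e * u i ^ 3)) = 0"
  unfolding sum_lessThan_5 dd_eq by simp algebra

definition moment :: "(nat \<Rightarrow> complex) \<Rightarrow> (nat \<Rightarrow> complex) \<Rightarrow> nat \<Rightarrow> nat \<Rightarrow> complex" where
  "moment u l m n = (\<Sum>i\<in>idx. MM u i * u i ^ m * l i ^ n)"

lemma moment_eq_delta_SS: "delta u \<noteq> 0 \<Longrightarrow> moment u l m n = delta u * SS u l m n"
  unfolding moment_def SS_def by simp

lemma delta_nonzero:
  assumes "\<And>i j. i < 5 \<Longrightarrow> j < 5 \<Longrightarrow> i \<noteq> j \<Longrightarrow> u i \<noteq> u j"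
  shows "delta u \<noteq> 0"
  unfolding delta_def idx_def using assms by (auto simp: prod_zero_iff)

lemma moment_power_eq_0:
  assumes "k \<in> {0, 1, 4, 5}"
  shows "moment u l k 0 = 0"
proof -
  define E where "E r = esym r idx u" for r
  define n where "n t = E 2 * t ^ 2 + (E 3 - E 1 * E 2) * t + E 2 ^ 2 - E 1 * E 3" for t
  have nn: "nn u i = n (u i)" if "i < 5" for i
    unfolding n_def E_def by (rule nn_eq_quadratic[OF that])
  \<comment> \<open>\<open>n\<close> is tailored so that \<open>t\<^sup>4 n(t)\<close> has degree 2 modulo \<open>\<Prod>\<^sub>j (t - u\<^sub>j)\<close>.\<close>
  have reduce4: "u i ^ 4 * n (u i) = E 3 * E 5 + (E 2 * E 5 - E 3 * E 4) * u i + (E 3 ^ 2 - E 2 * E 4) * u i ^ 2"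
    if "i < 5" for i
    using esym_idx_root[OF that, of u] unfolding n_def E_def by algebra
  have "\<exists>a b c e. \<forall>i<5. u i ^ k * n (u i) = a + b * u i + c * u i ^ 2 + e * u i ^ 3"
    using assms
  proof (elim insertE emptyE)
    assume "k = 0"
    then show ?thesis
      by (intro exI[of _ "E 2 ^ 2 - E 1 * E 3"] exI[of _ "E 3 - E 1 * E 2"] exI[of _ "E 2"] exI[of _ 0])
        (simp add: n_def algebra_simps)
  next
    assume "k = 1"
    then show ?thesis
      by (intro exI[of _ 0] exI[of _ "E 2 ^ 2 - E 1 * E 3"] exI[of _ "E 3 - E 1 * E 2"] exI[of _ "E 2"])
        (simp add: n_def algebra_simps power2_eq_square power3_eq_cube)
  next
    assume "k = 4"
    then show ?thesis
      using reduce4 by (intro exI[of _ "E 3 * E 5"] exI[of _ "E 2 * E 5 - E 3 * E 4"]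
          exI[of _ "E 3 ^ 2 - E 2 * E 4"] exI[of _ 0]) simp
  next
    assume "k = 5"
    have "u i ^ 5 * n (u i) = 0 + E 3 * E 5 * u i + (E 2 * E 5 - E 3 * E 4) * u i ^ 2
        + (E 3 ^ 2 - E 2 * E 4) * u i ^ 3" if "i < 5" for i
    proof -
      have "u i ^ 5 * n (u i) = u i * (u i ^ 4 * n (u i))"
        by algebra
      then show ?thesis
        unfolding reduce4[OF that] by algebra
    qed
    with \<open>k = 5\<close> show ?thesis
      by blast
  qed
  then obtain a b c e
    where cubic: "\<And>i. i < 5 \<Longrightarrow> u i ^ k * n (u i) = a + b * u i + c * u i ^ 2 + e * u i ^ 3"
    by blast
  have "moment u l k 0 = (\<Sum>i<5. (-1) ^ i * dd u i * (u i ^ k * n (u i)))"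
    unfolding moment_def idx_def MM_def by (intro sum.cong refl) (simp add: nn)
  also have "\<dots> = (\<Sum>i<5. (-1) ^ i * dd u i * (a + b * u i + c * u i ^ 2 + e * u i ^ 3))"
    by (intro sum.cong refl) (simp add: cubic)
  also have "\<dots> = 0"
    by (rule alternating_minor_sum_cubic)
  finally show ?thesis .
qed

lemma cubic_form_expand:
  "cubic_form k x y z = k 0 0 * z ^ 3 + k 0 1 * y * z ^ 2 + k 0 2 * y ^ 2 * z + k 0 3 * y ^ 3
    + k 1 0 * x * z ^ 2 + k 1 1 * x * y * z + k 1 2 * x * y ^ 2 + k 2 0 * x ^ 2 * z
    + k 2 1 * x ^ 2 * y + k 3 0 * x ^ 3"
proof -
  have "{(a, b). a + b \<le> (3::nat)} =
      {(0,0), (0,1), (0,2), (0,3), (1,0), (1,1), (1,2), (2,0), (2,1), (3,0)}"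
  proof (intro set_eqI iffI)
    fix p :: "nat \<times> nat"
    assume "p \<in> {(a, b). a + b \<le> 3}"
    then obtain a b where "p = (a, b)" "a + b \<le> 3"
      by blast
    moreover from \<open>a + b \<le> 3\<close>
    have "a = 0 \<or> a = 1 \<or> a = 2 \<or> a = 3" "b = 0 \<or> b = 1 \<or> b = 2 \<or> b = 3"
      by arith+
    ultimately show "p \<in> {(0,0), (0,1), (0,2), (0,3), (1,0), (1,1), (1,2), (2,0), (2,1), (3,0)}"
      by (elim disjE) simp_all
  qed auto
  then show ?thesis
    unfolding cubic_form_def by (simp add: algebra_simps)
qed

lemma cubic_form_diff:
  "cubic_form (\<lambda>a b. k a b - k' a b) x y z = cubic_form k x y z - cubic_form k' x y z"
  unfolding cubic_form_expand by algebra

lemma cubic_form_scale: "cubic_form (\<lambda>a b. s * k a b) x y z = s * cubic_form k x y z"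
  unfolding cubic_form_expand by algebra

lemma quintic_on_plane_expand:
  "quintic_on_plane u l x y z =
     z ^ 5 * moment u l 0 5 + 5 * y * z ^ 4 * moment u l 1 4 + 10 * y ^ 2 * z ^ 3 * moment u l 2 3
   + 10 * y ^ 3 * z ^ 2 * moment u l 3 2 + 5 * y ^ 4 * z * moment u l 4 1 + y ^ 5 * moment u l 5 0
   + 5 * x * z ^ 4 * moment u l 0 4 + 20 * x * y * z ^ 3 * moment u l 1 3
   + 30 * x * y ^ 2 * z ^ 2 * moment u l 2 2 + 20 * x * y ^ 3 * z * moment u l 3 1
   + 5 * x * y ^ 4 * moment u l 4 0 + 10 * x ^ 2 * z ^ 3 * moment u l 0 3
   + 30 * x ^ 2 * y * z ^ 2 * moment u l 1 2 + 30 * x ^ 2 * y ^ 2 * z * moment u l 2 1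
   + 10 * x ^ 2 * y ^ 3 * moment u l 3 0 + 10 * x ^ 3 * z ^ 2 * moment u l 0 2
   + 20 * x ^ 3 * y * z * moment u l 1 1 + 10 * x ^ 3 * y ^ 2 * moment u l 2 0
   + 5 * x ^ 4 * z * moment u l 0 1 + 5 * x ^ 4 * y * moment u l 1 0 + x ^ 5 * moment u l 0 0"
  unfolding quintic_on_plane_def moment_def idx_def sum_lessThan_5 by algebra

definition cofactor ::
  "(nat \<Rightarrow> complex) \<Rightarrow> (nat \<Rightarrow> complex) \<Rightarrow> complex \<Rightarrow> complex \<Rightarrow> complex \<Rightarrow> nat \<Rightarrow> nat \<Rightarrow> complex" where
  "cofactor u l \<alpha> \<beta> d a b =
     (if (a, b) = (2, 1) then 10 * SS u l 2 0
      else if (a, b) = (1, 2) then 10 * SS u l 3 0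
      else if (a, b) = (2, 0) then g1P u l \<alpha> \<beta>
      else if (a, b) = (1, 1) then g1xy u l \<alpha> \<beta>
      else if (a, b) = (0, 2) then g1Q u l \<alpha> \<beta>
      else if (a, b) = (1, 0) then g2P u l \<alpha> \<beta> d
      else if (a, b) = (0, 1) then g2Q u l \<alpha> \<beta> d
      else if (a, b) = (0, 0) then g3 u l \<alpha> \<beta> d
      else 0)"

lemma cubic_form_cofactor:
  "cubic_form (cofactor u l \<alpha> \<beta> d) x y z =
     10 * SS u l 2 0 * x ^ 2 * y + 10 * SS u l 3 0 * x * y ^ 2 + g1P u l \<alpha> \<beta> * x ^ 2 * z
   + g1xy u l \<alpha> \<beta> * x * y * z + g1Q u l \<alpha> \<beta> * y ^ 2 * z + g2P u l \<alpha> \<beta> d * x * z ^ 2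
   + g2Q u l \<alpha> \<beta> d * y * z ^ 2 + g3 u l \<alpha> \<beta> d * z ^ 3"
  unfolding cubic_form_expand cofactor_def by (simp add: algebra_simps)

definition residual_quadric ::
  "(nat \<Rightarrow> complex) \<Rightarrow> (nat \<Rightarrow> complex) \<Rightarrow> complex \<Rightarrow> complex \<Rightarrow> complex \<Rightarrow> complex \<Rightarrow> complex \<Rightarrow> complex \<Rightarrow> complex"
  where
  "residual_quadric u l \<alpha> \<beta> d x y z =
       (10 * SS u l 0 3 + \<beta> * g2P u l \<alpha> \<beta> d - g1P u l \<alpha> \<beta> * d) * x ^ 2
     + (10 * SS u l 2 3 + \<alpha> * g2Q u l \<alpha> \<beta> d - g1Q u l \<alpha> \<beta> * d) * y ^ 2
     + (5 * SS u l 0 4 + \<beta> * g3 u l \<alpha> \<beta> d - g2P u l \<alpha> \<beta> d * d) * x * z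
     + (5 * SS u l 1 4 + \<alpha> * g3 u l \<alpha> \<beta> d - g2Q u l \<alpha> \<beta> d * d) * y * z
     + (SS u l 0 5 - g3 u l \<alpha> \<beta> d * d) * z ^ 2"

lemma quintic_on_plane_decomposition:
  assumes "delta u \<noteq> 0"
    and "moment u l 0 0 = 0" "moment u l 1 0 = 0" "moment u l 4 0 = 0" "moment u l 5 0 = 0"
    and "moment u l 0 1 = 0" "moment u l 4 1 = 0"
  shows "quintic_on_plane u l x y z =
    delta u * (conic d \<alpha> \<beta> x y z * cubic_form (cofactor u l \<alpha> \<beta> d) x y z
      + 10 * z ^ 2 * (x ^ 3 * (SS u l 2 0 * \<beta> ^ 2 + 2 * SS u l 1 1 * \<beta> + SS u l 0 2)
                    + y ^ 3 * (SS u l 3 0 * \<alpha> ^ 2 + 2 * SS u l 3 1 * \<alpha> + SS u l 3 2))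
      + z ^ 3 * residual_quadric u l \<alpha> \<beta> d x y z)"
  unfolding quintic_on_plane_expand assms(2-7)
  unfolding moment_eq_delta_SS[OF assms(1)] cubic_form_cofactor conic_def residual_quadric_def g3_def g2P_def g2Q_def g1P_def g1Q_def g1xy_def
  by algebra

lemma quadratic_times_cubic_eq_t3_multiple:
  fixes p0 p1 p2 k0 k1 k2 k3 q0 q1 q2 :: "'a::{idom,real_normed_div_algebra}"
  assumes eq: "\<And>t. (p0 + p1 * t + p2 * t ^ 2) * (k0 + k1 * t + k2 * t ^ 2 + k3 * t ^ 3)
      = t ^ 3 * (q0 + q1 * t + q2 * t ^ 2)"
    and "p0 \<noteq> 0"
  shows "q0 = p0 * k3 \<and> q1 = p1 * k3 \<and> q2 = p2 * k3"
proof -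
  define c where "c = [p0 * k0, p0 * k1 + p1 * k0, p0 * k2 + p1 * k1 + p2 * k0,
    p0 * k3 + p1 * k2 + p2 * k1 - q0, p1 * k3 + p2 * k2 - q1, p2 * k3 - q2]"
  have "(\<Sum>i\<le>5. c ! i * t ^ i) = (p0 + p1 * t + p2 * t ^ 2) * (k0 + k1 * t + k2 * t ^ 2 + k3 * t ^ 3)
      - t ^ 3 * (q0 + q1 * t + q2 * t ^ 2)" for t
    by (simp add: c_def eval_nat_numeral algebra_simps)
  then have "\<forall>i\<le>5. c ! i = 0"
    using eq polyfun_eq_0[of "\<lambda>i. c ! i" 5] by simp
  then have "p0 * k0 = 0" "p0 * k1 + p1 * k0 = 0" "p0 * k2 + p1 * k1 + p2 * k0 = 0"
    "p0 * k3 + p1 * k2 + p2 * k1 - q0 = 0" "p1 * k3 + p2 * k2 - q1 = 0" "p2 * k3 - q2 = 0"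
    unfolding c_def by (auto dest: spec[of _ 0] spec[of _ 1] spec[of _ 2] spec[of _ 3] spec[of _ 4] spec[of _ 5]
      simp: numeral_eq_Suc)
  with \<open>p0 \<noteq> 0\<close> show ?thesis
    by simp
qed

lemma conic_times_cubic_eq_z3_quadric:
  assumes "\<And>x y z. conic d \<alpha> \<beta> x y z * cubic_form k x y z
      = z ^ 3 * (r1 * x ^ 2 + r2 * y ^ 2 + r3 * x * z + r4 * y * z + r5 * z ^ 2)"
  shows "r1 = 0 \<and> r2 = 0 \<and> r3 = 0 \<and> r4 = 0 \<and> r5 = 0"
proof -
  \<comment> \<open>On the line through \<open>(a:b:0)\<close> and \<open>(0:0:1)\<close> the conic does not vanish at \<open>(a:b:0)\<close>, so the
    cubic vanishes there to order 3 and is \<open>k 0 0 z\<^sup>3\<close>.\<close>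
  have line: "r1 * a ^ 2 + r2 * b ^ 2 = a * b * k 0 0 \<and> r3 * a + r4 * b = - (\<beta> * a + \<alpha> * b) * k 0 0
      \<and> r5 = d * k 0 0" if "a * b \<noteq> 0" for a b
  proof -
    have "(a * b + - (\<beta> * a + \<alpha> * b) * t + d * t ^ 2)
        * ((k 3 0 * a ^ 3 + k 2 1 * a ^ 2 * b + k 1 2 * a * b ^ 2 + k 0 3 * b ^ 3)
          + (k 2 0 * a ^ 2 + k 1 1 * a * b + k 0 2 * b ^ 2) * t + (k 1 0 * a + k 0 1 * b) * t ^ 2
          + k 0 0 * t ^ 3)
      = t ^ 3 * ((r1 * a ^ 2 + r2 * b ^ 2) + (r3 * a + r4 * b) * t + r5 * t ^ 2)" for t
      using assms[of a b t] unfolding conic_def cubic_form_expand by algebra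
    from quadratic_times_cubic_eq_t3_multiple[OF this that] show ?thesis .
  qed
  have "k 0 0 = 0"
    using line[of 1 1] line[of 1 "-1"] by simp
  then have line0: "r1 * a ^ 2 + r2 * b ^ 2 = 0 \<and> r3 * a + r4 * b = 0 \<and> r5 = 0"
    if "a * b \<noteq> 0" for a b
    using line[OF that] by simp
  from line0[of 1 1] line0[of 1 "-1"] line0[of 1 2]
  have "r1 + r2 = 0" "r1 + r2 * 4 = 0" "r3 + r4 = 0" "r3 - r4 = 0" "r5 = 0"
    by simp_all
  then show ?thesis
    by algebra
qed

theorem mainTheorem5:
  fixes u l :: "nat \<Rightarrow> complex" and \<alpha> \<beta> :: complex
  assumes distinct: "\<And>i j. i < 5 \<Longrightarrow> j < 5 \<Longrightarrow> i \<noteq> j \<Longrightarrow> u i \<noteq> u j"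
    and M_nonzero: "\<And>i. i < 5 \<Longrightarrow> MM u i \<noteq> 0"
    and R_in_plane1: "(\<Sum>i<5. MM u i * l i) = 0"
    and R_in_plane2: "(\<Sum>i<5. MM u i * u i ^ 4 * l i) = 0"
    and PQR_span: "\<And>a b c. (\<forall>i<5. a + b * u i + c * l i = 0) \<Longrightarrow> a = 0 \<and> b = 0 \<and> c = 0"
    and alpha_eq: "SS u l 3 0 * \<alpha>^2 + 2 * SS u l 3 1 * \<alpha> + SS u l 3 2 = 0"
    and beta_eq: "SS u l 2 0 * \<beta>^2 + 2 * SS u l 1 1 * \<beta> + SS u l 0 2 = 0"
  shows "(\<exists>d c. cubic_form c 1 0 0 = 0 \<and> cubic_form c 0 1 0 = 0 \<and>
            (\<forall>x y z. quintic_on_plane u l x y z = conic d \<alpha> \<beta> x y z * cubic_form c x y z))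
         \<longleftrightarrow> (\<exists>d. conic_eqns u l \<alpha> \<beta> d)"
proof -
  have \<delta>: "delta u \<noteq> 0"
    using distinct by (rule delta_nonzero)
  have plane: "moment u l 0 1 = 0" "moment u l 4 1 = 0"
    using R_in_plane1 R_in_plane2 by (simp_all add: moment_def idx_def)
  have decomp: "quintic_on_plane u l x y z = delta u * (conic d \<alpha> \<beta> x y z * cubic_form (cofactor u l \<alpha> \<beta> d) x y z
      + z ^ 3 * residual_quadric u l \<alpha> \<beta> d x y z)" for x y z d
    using quintic_on_plane_decomposition[OF \<delta> moment_power_eq_0 moment_power_eq_0 moment_power_eq_0
        moment_power_eq_0 plane, where \<alpha> = \<alpha> and \<beta> = \<beta> and d = d] alpha_eq beta_eq
    by simp
  show ?thesis
  proof
    assume "\<exists>d c. cubic_form c 1 0 0 = 0 \<and> cubic_form c 0 1 0 = 0 \<and>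
      (\<forall>x y z. quintic_on_plane u l x y z = conic d \<alpha> \<beta> x y z * cubic_form c x y z)"
    then obtain d c
      where fac: "\<And>x y z. quintic_on_plane u l x y z = conic d \<alpha> \<beta> x y z * cubic_form c x y z"
      by blast
    have "conic d \<alpha> \<beta> x y z * cubic_form (\<lambda>a b. inverse (delta u) * c a b - cofactor u l \<alpha> \<beta> d a b) x y z
        = z ^ 3 * residual_quadric u l \<alpha> \<beta> d x y z" for x y z
      using fac[of x y z] decomp[of x y z d] \<delta>
      unfolding cubic_form_diff cubic_form_scale by (simp add: field_simps)
    then have "conic_eqns u l \<alpha> \<beta> d"
      unfolding conic_eqns_def residual_quadric_def by (rule conic_times_cubic_eq_z3_quadric)
    then show "\<exists>d. conic_eqns u l \<alpha> \<beta> d" ..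
  next
    assume "\<exists>d. conic_eqns u l \<alpha> \<beta> d"
    then obtain d where "conic_eqns u l \<alpha> \<beta> d" ..
    then have "residual_quadric u l \<alpha> \<beta> d x y z = 0" for x y z
      unfolding conic_eqns_def residual_quadric_def by simp
    then have "quintic_on_plane u l x y z
        = conic d \<alpha> \<beta> x y z * cubic_form (\<lambda>a b. delta u * cofactor u l \<alpha> \<beta> d a b) x y z" for x y z
      using decomp[of x y z d] unfolding cubic_form_scale by simp
    moreover have "cubic_form (\<lambda>a b. delta u * cofactor u l \<alpha> \<beta> d a b) 1 0 0 = 0"
      "cubic_form (\<lambda>a b. delta u * cofactor u l \<alpha> \<beta> d a b) 0 1 0 = 0"
      unfolding cubic_form_scale cubic_form_cofactor by simp_all
    ultimately show "\<exists>d c. cubic_form c 1 0 0 = 0 \<and> cubic_form c 0 1 0 = 0 \<and>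
      (\<forall>x y z. quintic_on_plane u l x y z = conic d \<alpha> \<beta> x y z * cubic_form c x y z)"
      by blast
  qed
qed

end
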